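(* Let $t_j^i=\binom{i}{j}$ for $0\le j\le i$ (Pascal's triangle), and let $b_n=\sum_{i=0}^{n}\sum_{j=0}^{i}\binom{n}{j,\,n-i,\,i-j}t_j^i$ be its tetrahedron coefficient transform. Then for all $n\ge 0$, $$b_n=\sum_{\ell=0}^{n}\binom{n}{\ell}\binom{2\ell}{\ell},$$ i.e., $(b_n)$ is the binomial transform of the central binomial coefficients.
   Context: For non-negative integers $p,q,r$ with $p+q+r=n$, $\binom{n}{p,q,r}=\frac{n!}{p!\,q!\,r!}$ denotes the tetrahedron trinomial coefficient. The binomial transform of a sequence $(a_\ell)$ is the sequence $\sum_{\ell=0}^n\binom{n}{\ell}a_\ell$. *)

theory Defs
  imports Main
begin

text \<open>Trinomial (tetrahedron) coefficient n!/(p! q! r!), used only when p+q+r = n.\<close>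
definition trinomial :: "nat \<Rightarrow> nat \<Rightarrow> nat \<Rightarrow> nat \<Rightarrow> nat" where
  "trinomial n p q r = fact n div (fact p * fact q * fact r)"

definition pascal_t :: "nat \<Rightarrow> nat \<Rightarrow> nat" where
  "pascal_t i j = i choose j"

definition tetra_b :: "nat \<Rightarrow> nat" where
  "tetra_b n = (\<Sum>i=0..n. \<Sum>j=0..i. trinomial n j (n - i) (i - j) * pascal_t i j)"

end

theory Submission
  imports Defs
begin

text \<open>Choosing first the i elements that are not in the middle block and then the j among them
  shows that the trinomial coefficient factors as C(n,i) C(i,j). Hence the transform is the binomial
  transform of the sums of squares of the rows of Pascal's triangle, and Vandermonde's identity
  (the sum of the squares of row l is C(2l,l)) finishes the proof.\<close>

lemma trinomial_eq_choose_mult_choose: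
  assumes "j \<le> i" "i \<le> n"
  shows "trinomial n j (n - i) (i - j) = (n choose i) * (i choose j)"
proof -
  have outer: "fact i * fact (n - i) * (n choose i) = (fact n :: nat)"
    using binomial_fact_lemma[OF assms(2)] by simp
  have inner: "fact j * fact (i - j) * (i choose j) = (fact i :: nat)"
    using binomial_fact_lemma[OF assms(1)] by simp
  have "fact n = (fact j * fact (n - i) * fact (i - j)) * ((n choose i) * (i choose j))"
    using outer inner by (metis mult.commute mult.left_commute)
  moreover have "(fact j * fact (n - i) * fact (i - j) :: nat) > 0"
    by simp
  ultimately show ?thesis
    unfolding trinomial_def by simp
qed

lemma tetra_b_eq_binomial_transform_row_square_sums:
  "tetra_b n = (\<Sum>i=0..n. (n choose i) * (\<Sum>j=0..i. (i choose j)\<^sup>2))"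
  unfolding tetra_b_def pascal_t_def
  by (intro sum.cong refl)
     (simp add: trinomial_eq_choose_mult_choose sum_distrib_left power2_eq_square mult.assoc)

theorem theorem10:
  fixes n :: nat
  shows "tetra_b n = (\<Sum>l=0..n. (n choose l) * ((2 * l) choose l))"
  using choose_square_sum
  by (simp add: tetra_b_eq_binomial_transform_row_square_sums atLeast0AtMost)

end
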